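(* Let $q\in\mathscr{P}_2(\mathbb{R}^d)$ not give mass to small sets, and let $\psi:\mathbb{R}^d\to(-\infty,+\infty]$ be a lower semicontinuous convex function. Let $\varphi^\psi(x)\coloneqq\inf_{p\in\mathscr{P}_2^x(\mathbb{R}^d)}\big(\int\psi\,dp-\mathrm{MCov}(p,q)\big)$. (i) If there are $x\in\mathbb{R}^d$ and $\hat y(x)\in\mathbb{R}^d$ such that the push-forward $\hat p_x\coloneqq\nabla\psi^\ast(\hat y(x)+\cdot\,)(q)$ of $q$ under $z\mapsto\nabla\psi^\ast(\hat y(x)+z)$ belongs to $\mathscr{P}_2^x(\mathbb{R}^d)$, then $\hat p_x$ is the unique optimizer of the infimum defining $\varphi^\psi(x)$. (ii) If additionally $\varphi^\psi(x)>-\infty$ and $x\in\operatorname{int}(\operatorname{dom}\psi)$, then $\hat y(x)$ is an optimizer of the supremum in \[ \sup_{y\in\mathbb{R}^d}\Big(\langle x,y\rangle-\int\psi^\ast(y+z)\,q(dz)\Big). \]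
   Context: $\mathscr{P}_2(\mathbb{R}^d)$: Borel probability measures with finite second moment; $\mathscr{P}_2^x(\mathbb{R}^d)$: those with barycenter $x$. $q$ does not give mass to small sets: $q(A)=0$ for measurable $A$ of Hausdorff dimension $\le d-1$. $\mathrm{MCov}(p,q)\coloneqq\sup_{\tilde\pi\in\mathsf{Cpl}(p,q)}\int\langle y,z\rangle\,d\tilde\pi$ over couplings. $\operatorname{dom}\psi=\{\psi<+\infty\}$. $\psi^\ast(z)\coloneqq\sup_y(\langle z,y\rangle-\psi(y))$, whose gradient is defined $q$-a.e. where relevant. *)

theory Defs
  imports "HOL-Probability.Probability"
begin

definition diam_pow :: "real \<Rightarrow> 'a::euclidean_space set \<Rightarrow> ennreal" where
  "diam_pow s C = (if C = {} then 0
     else if diameter C = 0 then (if s = 0 then 1 else 0)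
     else ennreal (diameter C powr s))"

definition hausdorff_pre :: "real \<Rightarrow> real \<Rightarrow> 'a::euclidean_space set \<Rightarrow> ennreal" where
  "hausdorff_pre s \<delta> A = Inf {(\<Sum>n. diam_pow s (C n)) | C.
      A \<subseteq> (\<Union>n. C n) \<and> (\<forall>n. bounded (C n) \<and> diameter (C n) \<le> \<delta>)}"

definition hausdorff_measure :: "real \<Rightarrow> 'a::euclidean_space set \<Rightarrow> ennreal" where
  "hausdorff_measure s A = (SUP \<delta>\<in>{0<..}. hausdorff_pre s \<delta> A)"

definition hausdorff_dim :: "'a::euclidean_space set \<Rightarrow> ereal" where
  "hausdorff_dim A = Inf (ereal ` {s. 0 \<le> s \<and> hausdorff_measure s A = 0})"

definition no_mass_small_sets :: "'a::euclidean_space measure \<Rightarrow> bool" where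
  "no_mass_small_sets q \<longleftrightarrow>
     (\<forall>A\<in>sets q. hausdorff_dim A \<le> ereal (real DIM('a) - 1) \<longrightarrow> emeasure q A = 0)"

definition P2 :: "'a::euclidean_space measure set" where
  "P2 = {p. prob_space p \<and> sets p = sets borel \<and> integrable p (\<lambda>y. (norm y)\<^sup>2)}"

definition P2x :: "'a::euclidean_space \<Rightarrow> 'a measure set" where
  "P2x x = {p\<in>P2. (\<integral>y. y \<partial>p) = x}"

definition couplings :: "'a::euclidean_space measure \<Rightarrow> 'a measure \<Rightarrow> ('a \<times> 'a) measure set" where
  "couplings p q = {\<pi>. prob_space \<pi> \<and> sets \<pi> = sets borel \<and>
      distr \<pi> borel fst = p \<and> distr \<pi> borel snd = q}"

definition MCov :: "'a::euclidean_space measure \<Rightarrow> 'a measure \<Rightarrow> ereal" where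
  "MCov p q = (SUP \<pi>\<in>couplings p q. ereal (\<integral>w. fst w \<bullet> snd w \<partial>\<pi>))"

definition eint :: "'a measure \<Rightarrow> ('a \<Rightarrow> ereal) \<Rightarrow> ereal" where
  "eint M f = enn2ereal (\<integral>\<^sup>+x. e2ennreal (f x) \<partial>M) - enn2ereal (\<integral>\<^sup>+x. e2ennreal (- f x) \<partial>M)"

definition econvex :: "('a::real_vector \<Rightarrow> ereal) \<Rightarrow> bool" where
  "econvex f \<longleftrightarrow> (\<forall>x y t. 0 < t \<and> t < 1 \<longrightarrow>
      f ((1 - t) *\<^sub>R x + t *\<^sub>R y) \<le> ereal (1 - t) * f x + ereal t * f y)"

definition elsc :: "('a::topological_space \<Rightarrow> ereal) \<Rightarrow> bool" where
  "elsc f \<longleftrightarrow> (\<forall>x. f x \<le> Liminf (at x) f)"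

definition edom :: "('a \<Rightarrow> ereal) \<Rightarrow> 'a set" where
  "edom f = {x. f x < \<infinity>}"

definition conj :: "('a::real_inner \<Rightarrow> ereal) \<Rightarrow> 'a \<Rightarrow> ereal" where
  "conj f z = (SUP y. ereal (z \<bullet> y) - f y)"

definition has_egradient :: "('a::euclidean_space \<Rightarrow> ereal) \<Rightarrow> 'a \<Rightarrow> 'a \<Rightarrow> bool" where
  "has_egradient f z g \<longleftrightarrow> (\<exists>e>0. \<forall>w\<in>ball z e. \<bar>f w\<bar> \<noteq> \<infinity>) \<and>
     ((\<lambda>w. real_of_ereal (f w)) has_derivative (\<lambda>h. g \<bullet> h)) (at z)"

definition phi :: "('a::euclidean_space \<Rightarrow> ereal) \<Rightarrow> 'a measure \<Rightarrow> 'a \<Rightarrow> ereal" where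
  "phi \<psi> q x = (INF p\<in>P2x x. eint p \<psi> - MCov p q)"

end

(*
  For every coupling of p in P2x(x) with q, integrating the Fenchel--Young inequality
  psi(y) + psi*(yhat + z) >= <yhat + z, y> gives  int psi dp - int <y, z> >= <x, yhat> - int psi*(yhat + .) dq.
  Along the graph of G = grad psi*(yhat + .) Fenchel--Young is an equality (lower semicontinuity
  of psi makes near-maximisers of <w, .> - psi converge to grad psi*(w)), so the coupling (G z, z)
  of phat = G(q) and q attains the bound: phat is optimal and phi(x) = <x, yhat> - int psi*(yhat + .) dq.
  Integrating Fenchel--Young at (G z, y + z) shows that no y beats yhat in the dual problem.

  For uniqueness no optimal coupling (hence no compactness) is needed: an optimal p has couplings
  with arbitrarily small expected Fenchel--Young slack, differentiability of psi* forces such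
  couplings to concentrate near the graph of G, and then p and phat agree on all closed sets.
*)
theory Submission
  imports Defs
begin

section \<open>Convex conjugates\<close>

lemma fenchel_young: "ereal (v \<bullet> y) - f y \<le> conj f v"
  unfolding conj_def by (rule SUP_upper) simp

lemma fenchel_young_real: "f y = ereal a \<Longrightarrow> conj f v = ereal s \<Longrightarrow> v \<bullet> y \<le> a + s"
  using fenchel_young[of v y f] by simp

lemma conj_ge_affine: "f y = ereal a \<Longrightarrow> ereal (v \<bullet> y - a) \<le> conj f v"
  using fenchel_young[of v y f] by simp

lemma elsc_open_superlevel:
  assumes "elsc f" shows "open {y. c < f y}"
  unfolding open_subopen[of "{y. c < f y}"]
proof (intro ballI)
  fix y0 assume y0: "y0 \<in> {y. c < f y}"
  then have "c < Liminf (at y0) f"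
    using assms unfolding elsc_def by (blast intro: less_le_trans)
  then have "eventually (\<lambda>y. c < f y) (at y0)"
    using le_Liminf_iff by blast
  then obtain S where "open S" "y0 \<in> S" "\<forall>y\<in>S. y \<noteq> y0 \<longrightarrow> c < f y"
    by (auto simp: eventually_at_topological)
  with y0 show "\<exists>T. open T \<and> y0 \<in> T \<and> T \<subseteq> {y. c < f y}"
    by (intro exI[of _ S]) auto
qed

lemma borel_measurable_elsc: "elsc f \<Longrightarrow> f \<in> borel_measurable borel"
  by (rule borel_measurableI_greater) (simp add: elsc_open_superlevel)

lemma conj_open_superlevel: "open {v. c < conj f v}"
proof -
  have "open {v. c < ereal (v \<bullet> y) - f y}" for y
  proof (cases "f y")
    case (real a)
    have "open {v. c < ereal (v \<bullet> y - a)}"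
      by (intro open_Collect_less continuous_on_ereal continuous_intros)
    then show ?thesis using real by simp
  qed simp_all
  moreover have "{v. c < conj f v} = (\<Union>y. {v. c < ereal (v \<bullet> y) - f y})"
    unfolding conj_def by (auto simp: less_SUP_iff)
  ultimately show ?thesis by auto
qed

lemma borel_measurable_conj [measurable]: "conj f \<in> borel_measurable borel"
  by (rule borel_measurableI_greater) (simp add: conj_open_superlevel)

lemma has_egradient_finite: "has_egradient f w g \<Longrightarrow> f w = ereal (real_of_ereal (f w))"
  unfolding has_egradient_def by (auto simp: ereal_real')

lemma has_egradient_upper_bound:
  assumes "has_egradient f w g" "0 < \<epsilon>"
  obtains r where "0 < r"
    "\<And>h. norm h < r \<Longrightarrow> f (w + h) \<le> ereal (real_of_ereal (f w) + g \<bullet> h + \<epsilon> * norm h)"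
proof -
  obtain e where e: "0 < e" "\<forall>u\<in>ball w e. \<bar>f u\<bar> \<noteq> \<infinity>"
    and D: "((\<lambda>u. real_of_ereal (f u)) has_derivative (\<lambda>h. g \<bullet> h)) (at w)"
    using assms(1) unfolding has_egradient_def by blast
  obtain d where d: "0 < d" "\<And>y. norm (y - w) < d \<Longrightarrow>
      norm (real_of_ereal (f y) - real_of_ereal (f w) - g \<bullet> (y - w)) \<le> \<epsilon> * norm (y - w)"
    using D assms(2) unfolding has_derivative_at_alt by blast
  show thesis
  proof (rule that[of "min e d"])
    fix h :: 'a assume h: "norm h < min e d"
    then have "f (w + h) = ereal (real_of_ereal (f (w + h)))"
      using e by (simp add: dist_norm ereal_real')
    moreover have "real_of_ereal (f (w + h)) \<le> real_of_ereal (f w) + g \<bullet> h + \<epsilon> * norm h"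
      using d(2)[of "w + h"] h by simp
    ultimately show "f (w + h) \<le> ereal (real_of_ereal (f w) + g \<bullet> h + \<epsilon> * norm h)"
      by (metis ereal_less_eq(3))
  qed (use e d in simp)
qed

text \<open>Test the Fenchel--Young inequality at \<open>w + h\<close>, with \<open>h\<close> of fixed small length pointing
  from \<open>g\<close> towards \<open>y\<close>, against the first-order upper bound on \<open>f\<^sup>*(w + h)\<close>.\<close>
lemma conj_near_maximizer_near_gradient:
  assumes grad: "has_egradient (conj f) w g" and "0 < \<epsilon>"
  obtains \<delta> where "0 < \<delta>" "\<And>y a. f y = ereal a \<Longrightarrow>
    real_of_ereal (conj f w) - \<delta> < w \<bullet> y - a \<Longrightarrow> norm (y - g) < \<epsilon>"
proof -
  define s where "s = real_of_ereal (conj f w)"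
  obtain r where r: "0 < r"
    and up: "\<And>h. norm h < r \<Longrightarrow> conj f (w + h) \<le> ereal (s + g \<bullet> h + \<epsilon> / 2 * norm h)"
    by (rule has_egradient_upper_bound[OF grad, of "\<epsilon> / 2"]) (use \<open>0 < \<epsilon>\<close> in \<open>simp_all add: s_def\<close>)
  define t where "t = r / 2"
  have t: "0 < t" "t < r" using r by (simp_all add: t_def)
  have "norm (y - g) < \<epsilon>" if fy: "f y = ereal a" and near: "s - \<epsilon> * t / 2 < w \<bullet> y - a" for y a
  proof (cases "y = g")
    case False
    define h where "h = (t / norm (y - g)) *\<^sub>R (y - g)"
    have nh: "norm h = t" using False t by (simp add: h_def)
    have "h \<bullet> (y - g) = t / norm (y - g) * (norm (y - g))\<^sup>2"
      by (simp add: h_def power2_norm_eq_inner)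
    also have "\<dots> = norm (y - g) * t" using False by (simp add: power2_eq_square)
    finally have hy: "h \<bullet> y - g \<bullet> h = norm (y - g) * t"
      by (simp add: inner_diff_right inner_commute)
    have "ereal ((w + h) \<bullet> y) - f y \<le> conj f (w + h)" by (rule fenchel_young)
    also have "\<dots> \<le> ereal (s + g \<bullet> h + \<epsilon> * t / 2)" using up[of h] nh t by simp
    finally have "w \<bullet> y + h \<bullet> y - a \<le> s + g \<bullet> h + \<epsilon> * t / 2" using fy by (simp add: inner_add_left)
    then have "norm (y - g) * t < \<epsilon> * t" using near hy by linarith
    then show ?thesis using t by simp
  qed (use \<open>0 < \<epsilon>\<close> in simp)
  moreover have "0 < \<epsilon> * t / 2" using \<open>0 < \<epsilon>\<close> t by simp
  ultimately show thesis using that unfolding s_def by blast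
qed

text \<open>Where \<open>\<nabla>\<psi>\<^sup>*(w) = g\<close>, Fenchel--Young is an equality at \<open>(g, w)\<close>: near-maximisers of
  \<open>w \<bullet> y - \<psi> y\<close> converge to \<open>g\<close>, and lower semicontinuity passes their values to the limit.\<close>
lemma conj_gradient_fenchel_le:
  assumes lsc: "elsc f" and ninf: "\<forall>y. f y \<noteq> -\<infinity>" and grad: "has_egradient (conj f) w g"
  shows "f g \<le> ereal (w \<bullet> g - real_of_ereal (conj f w))"
proof (rule ccontr)
  define s where "s = real_of_ereal (conj f w)"
  have cs: "conj f w = ereal s" unfolding s_def by (rule has_egradient_finite[OF grad])
  assume "\<not> f g \<le> ereal (w \<bullet> g - real_of_ereal (conj f w))"
  then have "ereal (w \<bullet> g - s) < f g" by (simp add: s_def)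
  then obtain c where "ereal (w \<bullet> g - s) < ereal c" and cg: "ereal c < f g"
    using ereal_dense2 by blast
  define gap where "gap = c - (w \<bullet> g - s)"
  have gap: "0 < gap" using \<open>ereal (w \<bullet> g - s) < ereal c\<close> by (simp add: gap_def)
  obtain \<rho> where \<rho>: "0 < \<rho>" "ball g \<rho> \<subseteq> {y. ereal c < f y}"
    using open_contains_ball elsc_open_superlevel[OF lsc] cg by blast
  define \<epsilon> where "\<epsilon> = min \<rho> (gap / (2 * (norm w + 1)))"
  have K: "0 < 2 * (norm w + 1)" by (smt (verit) norm_ge_zero)
  have \<epsilon>: "0 < \<epsilon>" "\<epsilon> \<le> \<rho>" using \<rho> K gap by (simp_all add: \<epsilon>_def)
  have "\<epsilon> * (2 * (norm w + 1)) \<le> gap"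
    using K by (simp add: \<epsilon>_def flip: pos_le_divide_eq)
  then have w\<epsilon>: "norm w * \<epsilon> \<le> gap / 2" using \<epsilon>(1) by (simp add: algebra_simps)
  obtain \<delta> where \<delta>: "0 < \<delta>"
    and close: "\<And>y a. f y = ereal a \<Longrightarrow> s - \<delta> < w \<bullet> y - a \<Longrightarrow> norm (y - g) < \<epsilon>"
    using conj_near_maximizer_near_gradient[OF grad \<epsilon>(1)] unfolding s_def by blast
  define \<delta>' where "\<delta>' = min \<delta> (gap / 2)"
  have "ereal (s - \<delta>') < conj f w" using cs \<delta> gap by (simp add: \<delta>'_def)
  then obtain y where y: "ereal (s - \<delta>') < ereal (w \<bullet> y) - f y"
    unfolding conj_def by (auto simp: less_SUP_iff)
  then obtain a where a: "f y = ereal a" using ninf by (cases "f y") auto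
  have near: "s - \<delta>' < w \<bullet> y - a" using y a by simp
  then have yg: "norm (y - g) < \<epsilon>" using close[OF a] by (simp add: \<delta>'_def)
  then have "y \<in> ball g \<rho>" using \<epsilon> by (simp add: dist_norm norm_minus_commute)
  then have "c < a" using \<rho> a by auto
  have "w \<bullet> (y - g) \<le> norm w * norm (y - g)" by (rule norm_cauchy_schwarz)
  also have "\<dots> \<le> norm w * \<epsilon>" using yg by (simp add: mult_left_mono)
  finally have "w \<bullet> y \<le> w \<bullet> g + gap / 2" using w\<epsilon> by (simp add: inner_diff_right)
  moreover have "\<delta>' \<le> gap / 2" by (simp add: \<delta>'_def)
  ultimately show False using near \<open>c < a\<close> unfolding gap_def by argo
qed

lemma conj_gradient_fenchel_eq:
  assumes lsc: "elsc f" and ninf: "\<forall>y. f y \<noteq> -\<infinity>" and grad: "has_egradient (conj f) w g"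
  shows "f g = ereal (w \<bullet> g - real_of_ereal (conj f w))"
proof (rule antisym[OF conj_gradient_fenchel_le[OF assms]])
  have s: "conj f w = ereal (real_of_ereal (conj f w))" by (rule has_egradient_finite[OF grad])
  show "ereal (w \<bullet> g - real_of_ereal (conj f w)) \<le> f g"
  proof (cases "f g")
    case (real r)
    then show ?thesis using fenchel_young_real[OF real s] by simp
  qed (use ninf in auto)
qed

lemma fenchel_young_gap_lower_bound:
  assumes "f y = ereal a" and "conj f (w + t *\<^sub>R v) < ereal (s + t * (g \<bullet> v) + t * d / 2)"
    and "d \<le> (y - g) \<bullet> v" and "0 \<le> t"
  shows "t * d / 2 < a + s - w \<bullet> y"
proof -
  have "ereal ((w + t *\<^sub>R v) \<bullet> y - a) < ereal (s + t * (g \<bullet> v) + t * d / 2)"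
    using conj_ge_affine[of f y a "w + t *\<^sub>R v", OF assms(1)] assms(2) by (rule le_less_trans)
  then have "w \<bullet> y + t * (v \<bullet> y) - a < s + t * (g \<bullet> v) + t * d / 2"
    by (simp add: inner_add_left)
  moreover have "t * d \<le> t * ((y - g) \<bullet> v)" by (rule mult_left_mono[OF assms(3,4)])
  moreover have "t * ((y - g) \<bullet> v) = t * (v \<bullet> y) - t * (g \<bullet> v)"
    by (simp add: inner_diff_left inner_commute[of y v] right_diff_distrib)
  ultimately show ?thesis by linarith
qed

lemma enn2ereal_eq_ereal_enn2real: "X < top \<Longrightarrow> enn2ereal X = ereal (enn2real X)"
  by (metis enn2ereal_eq_top_iff enn2ereal_nonneg ereal_real' ereal_infty_less_eq(2)
      real_of_ereal_enn2ereal less_irrefl abs_ereal_ge0 order_le_less_trans abs_ereal_pos)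

lemma eint_eq_integral:
  assumes ae: "AE x in M. f x = ereal (h x)" and h: "integrable M h"
  shows "eint M f = ereal (\<integral>x. h x \<partial>M)"
proof -
  have pos: "(\<integral>\<^sup>+x. e2ennreal (f x) \<partial>M) = (\<integral>\<^sup>+x. ennreal (h x) \<partial>M)"
    and neg: "(\<integral>\<^sup>+x. e2ennreal (- f x) \<partial>M) = (\<integral>\<^sup>+x. ennreal (- h x) \<partial>M)"
    by (auto intro!: nn_integral_cong_AE simp: ae[THEN AE_mp, OF AE_I2])
  have fin_pos: "(\<integral>\<^sup>+x. ennreal (h x) \<partial>M) < top"
    and fin_neg: "(\<integral>\<^sup>+x. ennreal (- h x) \<partial>M) < top"
    using integrableD(2,3)[OF h] by (simp_all add: top.not_eq_extremum)
  show ?thesis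
    unfolding eint_def pos neg enn2ereal_eq_ereal_enn2real[OF fin_pos]
      enn2ereal_eq_ereal_enn2real[OF fin_neg]
    using real_lebesgue_integral_def[OF h] by simp
qed

lemma ennreal_norm_real_of_ereal_le:
  assumes "ereal a \<le> e"
  shows "ennreal (norm (real_of_ereal e)) \<le> e2ennreal e + ennreal (- a)"
proof (cases e)
  case (real r)
  show ?thesis
  proof (cases "0 \<le> r")
    case True
    then show ?thesis using real by (simp add: add_increasing2)
  next
    case False
    then have "ennreal (norm r) \<le> ennreal (- a)" using assms real by (simp add: ennreal_leI)
    also have "\<dots> \<le> e2ennreal e + ennreal (- a)" by (simp add: add_increasing)
    finally show ?thesis using real by simp
  qed
qed (use assms in simp_all)

lemma nn_integral_neg_part_finite:
  assumes lb: "\<And>x. x \<in> space M \<Longrightarrow> ereal (a x) \<le> f x" and a: "integrable M a"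
  shows "(\<integral>\<^sup>+x. e2ennreal (- f x) \<partial>M) < top"
proof -
  have "e2ennreal (- f x) \<le> ennreal (- a x)" if "x \<in> space M" for x
    using lb[OF that] by (metis e2ennreal_mono ereal_minus_le_minus uminus_ereal.simps(1) e2ennreal_ereal)
  then have "(\<integral>\<^sup>+x. e2ennreal (- f x) \<partial>M) \<le> (\<integral>\<^sup>+x. ennreal (- a x) \<partial>M)"
    by (rule nn_integral_mono)
  also have "\<dots> < top" using integrableD(3)[OF a] by (simp add: top.not_eq_extremum)
  finally show ?thesis .
qed

lemma eint_finite_bounded_below:
  fixes f :: "'b \<Rightarrow> ereal"
  assumes f [measurable]: "f \<in> borel_measurable M"
    and lb: "\<And>x. x \<in> space M \<Longrightarrow> ereal (a x) \<le> f x" and a: "integrable M a"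
    and fin: "eint M f \<noteq> \<infinity>"
  shows "integrable M (\<lambda>x. real_of_ereal (f x))"
    and "AE x in M. f x = ereal (real_of_ereal (f x))"
    and "eint M f = ereal (\<integral>x. real_of_ereal (f x) \<partial>M)"
proof -
  have [measurable]: "a \<in> borel_measurable M" using a by auto
  note neg = nn_integral_neg_part_finite[OF lb a]
  have neg_a: "(\<integral>\<^sup>+x. ennreal (- a x) \<partial>M) < top"
    using integrableD(3)[OF a] by (simp add: top.not_eq_extremum)
  have pos: "(\<integral>\<^sup>+x. e2ennreal (f x) \<partial>M) < top"
  proof (rule ccontr)
    assume "\<not> ?thesis"
    then have "(\<integral>\<^sup>+x. e2ennreal (f x) \<partial>M) = top" using top.not_eq_extremum by blast
    then show False using fin enn2ereal_eq_ereal_enn2real[OF neg] unfolding eint_def by simp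
  qed
  have "AE x in M. e2ennreal (f x) \<noteq> \<infinity>"
    by (rule nn_integral_PInf_AE) (use pos in auto)
  then show ae: "AE x in M. f x = ereal (real_of_ereal (f x))"
  proof (rule AE_mp, intro AE_I2 impI)
    fix x assume "x \<in> space M" "e2ennreal (f x) \<noteq> \<infinity>"
    then show "f x = ereal (real_of_ereal (f x))"
      using lb[of x] by (cases "f x") auto
  qed
  show int: "integrable M (\<lambda>x. real_of_ereal (f x))"
  proof (rule integrableI_bounded)
    have "(\<integral>\<^sup>+x. ennreal (norm (real_of_ereal (f x))) \<partial>M) \<le>
        (\<integral>\<^sup>+x. e2ennreal (f x) + ennreal (- a x) \<partial>M)"
      by (rule nn_integral_mono) (rule ennreal_norm_real_of_ereal_le[OF lb])
    also have "\<dots> = (\<integral>\<^sup>+x. e2ennreal (f x) \<partial>M) + (\<integral>\<^sup>+x. ennreal (- a x) \<partial>M)"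
      by (rule nn_integral_add) auto
    also have "\<dots> < \<infinity>" using pos neg_a by (simp add: ennreal_add_less_top)
    finally show "(\<integral>\<^sup>+x. ennreal (norm (real_of_ereal (f x))) \<partial>M) < \<infinity>" .
  qed simp
  show "eint M f = ereal (\<integral>x. real_of_ereal (f x) \<partial>M)"
    by (rule eint_eq_integral[OF ae int])
qed

lemma eint_distr:
  assumes "g \<in> measurable M N" and "f \<in> borel_measurable N"
  shows "eint (distr M N g) f = eint M (\<lambda>x. f (g x))"
  using assms unfolding eint_def by (simp add: nn_integral_distr)

lemma integrable_bounded_between:
  fixes f :: "'b \<Rightarrow> real"
  assumes "integrable M l" "integrable M u" "f \<in> borel_measurable M"
    and "AE x in M. l x \<le> f x \<and> f x \<le> u x"
  shows "integrable M f"
proof (rule Bochner_Integration.integrable_bound[where f="\<lambda>x. \<bar>l x\<bar> + \<bar>u x\<bar>"])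
  show "AE x in M. norm (f x) \<le> norm (\<bar>l x\<bar> + \<bar>u x\<bar>)"
    using assms(4) by eventually_elim auto
qed (use assms in auto)

lemma borel_measurable_fst [measurable]:
  "fst \<in> borel_measurable (borel :: ('a::second_countable_topology \<times> 'b::second_countable_topology) measure)"
  using measurable_fst[of "borel :: 'a measure" "borel :: 'b measure"] by (simp add: borel_prod)

lemma borel_measurable_snd [measurable]:
  "snd \<in> borel_measurable (borel :: ('a::second_countable_topology \<times> 'b::second_countable_topology) measure)"
  using measurable_snd[of "borel :: 'a measure" "borel :: 'b measure"] by (simp add: borel_prod)

lemma measurable_borel_sets_eq: "sets M = sets borel \<Longrightarrow> f \<in> borel_measurable borel \<Longrightarrow> f \<in> borel_measurable M"
  using measurable_cong_sets[of M borel borel borel] by simp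

lemma P2D:
  assumes "p \<in> P2"
  shows "prob_space p" "sets p = sets borel" "space p = UNIV"
    "integrable p (\<lambda>y. (norm y)\<^sup>2)" "integrable p (\<lambda>y. y)"
proof -
  show pp: "prob_space p" and sp: "sets p = sets borel" and sq: "integrable p (\<lambda>y. (norm y)\<^sup>2)"
    using assms by (auto simp: P2_def)
  show "space p = UNIV" using sets_eq_imp_space_eq[OF sp] by simp
  have nm: "(\<lambda>y. norm y) \<in> borel_measurable p" "(\<lambda>y. y) \<in> borel_measurable p"
    by (simp_all add: measurable_borel_sets_eq[OF sp])
  have "integrable p (\<lambda>y. norm y)"
    by (rule finite_measure.square_integrable_imp_integrable[OF prob_space.finite_measure[OF pp] nm(1)])
      (use sq in simp)
  then show "integrable p (\<lambda>y. y)"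
    using integrable_norm_iff[OF nm(2)] by blast
qed

lemma P2_integrable_affine: "p \<in> P2 \<Longrightarrow> integrable p (\<lambda>y. y \<bullet> w + c)"
  using P2D(1,5)[of p] by (simp add: prob_space.finite_measure finite_measure.integrable_const)

lemma integrable_inner_square_integrable:
  fixes f g :: "'b \<Rightarrow> 'a::euclidean_space"
  assumes [measurable]: "f \<in> borel_measurable M" "g \<in> borel_measurable M"
    and "integrable M (\<lambda>x. (norm (f x))\<^sup>2)" "integrable M (\<lambda>x. (norm (g x))\<^sup>2)"
  shows "integrable M (\<lambda>x. f x \<bullet> g x)"
proof (rule Bochner_Integration.integrable_bound)
  show "integrable M (\<lambda>x. (norm (f x))\<^sup>2 + (norm (g x))\<^sup>2)" using assms(3,4) by simp
  have "\<bar>f x \<bullet> g x\<bar> \<le> (norm (f x))\<^sup>2 + (norm (g x))\<^sup>2" for x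
  proof -
    have "\<bar>f x \<bullet> g x\<bar> \<le> norm (f x) * norm (g x)" by (rule Cauchy_Schwarz_ineq2)
    also have "\<dots> \<le> (norm (f x))\<^sup>2 + (norm (g x))\<^sup>2"
      using sum_squares_bound[of "norm (f x)" "norm (g x)"] mult_nonneg_nonneg[OF norm_ge_zero[of "f x"] norm_ge_zero[of "g x"]]
      unfolding power2_eq_square by linarith
    finally show ?thesis .
  qed
  then show "AE x in M. norm (f x \<bullet> g x) \<le> norm ((norm (f x))\<^sup>2 + (norm (g x))\<^sup>2)" by simp
qed simp

lemma couplingsD:
  assumes "\<pi> \<in> couplings p q"
  shows "prob_space \<pi>" "sets \<pi> = sets borel" "space \<pi> = UNIV"
    "distr \<pi> borel fst = p" "distr \<pi> borel snd = q"
    "fst \<in> borel_measurable \<pi>" "snd \<in> borel_measurable \<pi>"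
proof -
  show sp: "sets \<pi> = sets borel" and "prob_space \<pi>" "distr \<pi> borel fst = p" "distr \<pi> borel snd = q"
    using assms by (auto simp: couplings_def)
  show "space \<pi> = UNIV" using sets_eq_imp_space_eq[OF sp] by simp
  show "fst \<in> borel_measurable \<pi>" "snd \<in> borel_measurable \<pi>"
    by (simp_all add: measurable_borel_sets_eq[OF sp])
qed

lemma coupling_fst_marginal:
  fixes f :: "'a::euclidean_space \<Rightarrow> real"
  assumes \<pi>: "\<pi> \<in> couplings p q" and f: "f \<in> borel_measurable borel"
  shows "integrable \<pi> (\<lambda>w. f (fst w)) \<longleftrightarrow> integrable p f"
    and "(\<integral>w. f (fst w) \<partial>\<pi>) = (\<integral>y. f y \<partial>p)"
  using integrable_distr_eq[OF couplingsD(6)[OF \<pi>] f] integral_distr[OF couplingsD(6)[OF \<pi>] f]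
  by (simp_all add: couplingsD(4)[OF \<pi>])

lemma coupling_snd_marginal:
  fixes f :: "'a::euclidean_space \<Rightarrow> real"
  assumes \<pi>: "\<pi> \<in> couplings p q" and f: "f \<in> borel_measurable borel"
  shows "integrable \<pi> (\<lambda>w. f (snd w)) \<longleftrightarrow> integrable q f"
    and "(\<integral>w. f (snd w) \<partial>\<pi>) = (\<integral>z. f z \<partial>q)"
  using integrable_distr_eq[OF couplingsD(7)[OF \<pi>] f] integral_distr[OF couplingsD(7)[OF \<pi>] f]
  by (simp_all add: couplingsD(5)[OF \<pi>])

lemma AE_coupling_fst:
  assumes \<pi>: "\<pi> \<in> couplings p q" and "AE y in p. P y"
  shows "AE w in \<pi>. P (fst w)"
proof (rule AE_distrD[OF couplingsD(6)[OF \<pi>]])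
  show "AE y in distr \<pi> borel fst. P y" unfolding couplingsD(4)[OF \<pi>] by (rule assms(2))
qed

lemma AE_coupling_snd:
  assumes \<pi>: "\<pi> \<in> couplings p q" and "AE z in q. P z"
  shows "AE w in \<pi>. P (snd w)"
proof (rule AE_distrD[OF couplingsD(7)[OF \<pi>]])
  show "AE z in distr \<pi> borel snd. P z" unfolding couplingsD(5)[OF \<pi>] by (rule assms(2))
qed

lemma integrable_coupling_inner:
  assumes \<pi>: "\<pi> \<in> couplings p q" and "p \<in> P2" "q \<in> P2"
  shows "integrable \<pi> (\<lambda>w. fst w \<bullet> snd w)"
proof (rule integrable_inner_square_integrable)
  have sq [measurable]: "(\<lambda>y::'a. (norm y)\<^sup>2) \<in> borel_measurable borel" by measurable
  show "integrable \<pi> (\<lambda>w. (norm (fst w))\<^sup>2)"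
    using coupling_fst_marginal(1)[OF \<pi> sq] P2D(4)[OF assms(2)] by simp
  show "integrable \<pi> (\<lambda>w. (norm (snd w))\<^sup>2)"
    using coupling_snd_marginal(1)[OF \<pi> sq] P2D(4)[OF assms(3)] by simp
qed (use couplingsD[OF \<pi>] in simp_all)

section \<open>Couplings concentrating on a graph\<close>

lemma thickening_borel [measurable]: "{u::'a::metric_space. infdist u A < \<delta>} \<in> sets borel"
  by (intro borel_open open_Collect_less continuous_intros)

lemma INT_thickenings_closed:
  fixes A :: "'a::metric_space set"
  assumes "closed A" "A \<noteq> {}"
  shows "(\<Inter>n. {u. infdist u A < inverse (Suc n)}) = A"
proof
  show "A \<subseteq> (\<Inter>n. {u. infdist u A < inverse (Suc n)})" by auto
  show "(\<Inter>n. {u. infdist u A < inverse (Suc n)}) \<subseteq> A"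
  proof
    fix u assume u: "u \<in> (\<Inter>n. {u. infdist u A < inverse (Suc n)})"
    have "infdist u A \<le> 0"
    proof (rule field_le_epsilon)
      fix e :: real assume "0 < e"
      then obtain n where "inverse (Suc n) < e" using reals_Archimedean by blast
      moreover have "infdist u A < inverse (Suc n)" using u by blast
      ultimately show "infdist u A \<le> 0 + e" by simp
    qed
    then show "u \<in> A" using assms in_closed_iff_infdist_zero[of A u] infdist_nonneg[of u A] by simp
  qed
qed

lemma measure_closed_le_of_thickenings:
  fixes A :: "'a::{metric_space, second_countable_topology} set"
  assumes N: "finite_measure N" "sets N = sets borel" and A: "closed A"
    and le: "\<And>\<delta>. 0 < \<delta> \<Longrightarrow> measure M A \<le> measure N {u. infdist u A < \<delta>}"
  shows "measure M A \<le> measure N A"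
proof (cases "A = {}")
  case False
  define D where "D n = {u. infdist u A < inverse (Suc n)}" for n
  have "D n \<subseteq> D m" if "m \<le> n" for m n
  proof -
    have "inverse (real (Suc n)) \<le> inverse (real (Suc m))" using that by (simp add: le_imp_inverse_le)
    then show ?thesis unfolding D_def by (intro Collect_mono impI) linarith
  qed
  then have "decseq D" by (rule antimonoI)
  moreover have "range D \<subseteq> sets N" unfolding D_def N(2) by (auto intro: thickening_borel)
  ultimately have "(\<lambda>n. measure N (D n)) \<longlonglongrightarrow> measure N (\<Inter>n. D n)"
    by (rule finite_measure.finite_Lim_measure_decseq[OF N(1), rotated])
  then have lim: "(\<lambda>n. measure N (D n)) \<longlonglongrightarrow> measure N A"
    unfolding D_def INT_thickenings_closed[OF A False] .
  have "measure M A \<le> measure N (D n)" for n unfolding D_def by (rule le) simp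
  then show ?thesis by (intro LIMSEQ_le_const[OF lim]) blast
qed simp

lemma measure_eqI_closed:
  fixes M N :: "'a::topological_space measure"
  assumes M: "finite_measure M" "sets M = sets borel" and N: "finite_measure N" "sets N = sets borel"
    and eq: "\<And>A. closed A \<Longrightarrow> measure M A = measure N A"
  shows "M = N"
proof (rule measure_eqI_generator_eq[where E="Collect closed" and \<Omega>=UNIV and A="\<lambda>_. UNIV"])
  show "\<And>X. X \<in> Collect closed \<Longrightarrow> emeasure M X = emeasure N X"
    using eq M N by (simp add: finite_measure.emeasure_eq_measure)
  show "sets M = sigma_sets UNIV (Collect closed)" "sets N = sigma_sets UNIV (Collect closed)"
    using M(2) N(2) by (simp_all add: borel_eq_closed)
  show "emeasure M UNIV \<noteq> \<infinity>" for i :: nat by (simp add: finite_measure.emeasure_finite[OF M(1)])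
qed (auto simp: Int_stable_def)

lemma measure_distr_le_thickening:
  fixes X Y :: "'b \<Rightarrow> 'a::{metric_space, second_countable_topology}"
  assumes M: "finite_measure M" and X [measurable]: "X \<in> borel_measurable M"
    and Y [measurable]: "Y \<in> borel_measurable M" and A [measurable]: "A \<in> sets borel"
  shows "measure (distr M borel X) A
    \<le> measure (distr M borel Y) {u. infdist u A < \<delta>} + measure M {w\<in>space M. \<delta> \<le> dist (X w) (Y w)}"
proof -
  define T where "T = {u. infdist u A < \<delta>}"
  define B where "B = {w\<in>space M. \<delta> \<le> dist (X w) (Y w)}"
  have T: "T \<in> sets borel" unfolding T_def by (rule thickening_borel)
  have B: "B \<in> sets M" unfolding B_def by measurable
  have YT: "Y -` T \<inter> space M \<in> sets M" using measurable_sets[OF Y T] .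
  have "X -` A \<inter> space M \<subseteq> (Y -` T \<inter> space M) \<union> B"
  proof
    fix w assume w: "w \<in> X -` A \<inter> space M"
    then have "infdist (Y w) A \<le> dist (X w) (Y w)"
      using infdist_le[of "X w" A "Y w"] by (simp add: dist_commute)
    then show "w \<in> (Y -` T \<inter> space M) \<union> B"
      using w by (auto simp: T_def B_def)
  qed
  then have "measure M (X -` A \<inter> space M) \<le> measure M ((Y -` T \<inter> space M) \<union> B)"
    using YT B by (intro finite_measure.finite_measure_mono[OF M]) auto
  also have "\<dots> \<le> measure M (Y -` T \<inter> space M) + measure M B"
    using YT B by (rule measure_Un_le)
  finally show ?thesis
    unfolding T_def[symmetric] B_def[symmetric] measure_distr[OF X A] measure_distr[OF Y T] .
qed

text \<open>Each of \<open>p\<close> and \<open>G(q)\<close> gives a closed set at most the mass the other gives its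
  \<open>\<delta>\<close>-thickening, up to the mass of the coupling at distance \<open>\<ge> \<delta>\<close> from the graph.\<close>
lemma eq_distr_of_couplings_concentrating:
  fixes p q :: "'a::euclidean_space measure"
  assumes p: "prob_space p" "sets p = sets borel" and q: "prob_space q" "sets q = sets borel"
    and G [measurable]: "G \<in> borel_measurable borel"
    and conc: "\<And>\<delta> \<eta>. 0 < \<delta> \<Longrightarrow> 0 < \<eta> \<Longrightarrow>
      \<exists>\<pi>\<in>couplings p q. measure \<pi> {w. \<delta> \<le> dist (fst w) (G (snd w))} \<le> \<eta>"
  shows "p = distr q borel G"
proof -
  have thick: "measure (distr q borel G) A \<le> measure p {u. infdist u A < \<delta>} + \<eta>
             \<and> measure p A \<le> measure (distr q borel G) {u. infdist u A < \<delta>} + \<eta>"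
    if "closed A" "0 < \<delta>" "0 < \<eta>" for A \<delta> \<eta>
  proof -
    obtain \<pi> where \<pi>: "\<pi> \<in> couplings p q" and bad: "measure \<pi> {w. \<delta> \<le> dist (fst w) (G (snd w))} \<le> \<eta>"
      using conc \<open>0 < \<delta>\<close> \<open>0 < \<eta>\<close> by blast
    note c = couplingsD[OF \<pi>]
    have fin: "finite_measure \<pi>" using c(1) by (rule prob_space.finite_measure)
    have [measurable]: "(\<lambda>w. G (snd w)) \<in> borel_measurable \<pi>" using c(7) by measurable
    have "distr \<pi> borel (\<lambda>w. G (snd w)) = distr q borel G"
      using distr_distr[OF G c(7)] c(5) by (simp add: comp_def)
    then show ?thesis
      using measure_distr_le_thickening[OF fin c(6), of "\<lambda>w. G (snd w)" A \<delta>]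
        measure_distr_le_thickening[OF fin _ c(6), of "\<lambda>w. G (snd w)" A \<delta>]
        bad c(3,4) \<open>closed A\<close> by (simp add: dist_commute)
  qed
  have fin_p: "finite_measure p" using p(1) by (rule prob_space.finite_measure)
  have "prob_space (distr q borel G)"
    by (rule prob_space.prob_space_distr[OF q(1)]) (simp add: measurable_borel_sets_eq[OF q(2)])
  then have fin_G: "finite_measure (distr q borel G)" by (rule prob_space.finite_measure)
  show ?thesis
  proof (rule measure_eqI_closed[OF fin_p p(2) fin_G])
    fix A :: "'a set" assume "closed A"
    show "measure p A = measure (distr q borel G) A"
    proof (rule antisym)
      show "measure p A \<le> measure (distr q borel G) A"
        by (rule measure_closed_le_of_thickenings[OF fin_G _ \<open>closed A\<close>], simp)
          (use thick[OF \<open>closed A\<close>] in \<open>auto intro: field_le_epsilon\<close>)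
      show "measure (distr q borel G) A \<le> measure p A"
        by (rule measure_closed_le_of_thickenings[OF fin_p p(2) \<open>closed A\<close>])
          (use thick[OF \<open>closed A\<close>] in \<open>auto intro: field_le_epsilon\<close>)
    qed
  qed simp
qed

lemma exists_signed_Basis_inner_ge:
  fixes u :: "'a::euclidean_space"
  assumes "\<delta> \<le> norm u"
  obtains v where "v \<in> Basis \<union> uminus ` Basis" "\<delta> / DIM('a) \<le> u \<bullet> v"
proof -
  obtain b where b: "b \<in> Basis" "\<delta> / DIM('a) \<le> \<bar>u \<bullet> b\<bar>"
  proof (rule ccontr)
    assume "\<not> thesis"
    then have "\<And>b. b \<in> Basis \<Longrightarrow> \<bar>u \<bullet> b\<bar> < \<delta> / DIM('a)" using that by force
    then have "(\<Sum>b\<in>Basis. \<bar>u \<bullet> b\<bar>) < DIM('a) * (\<delta> / DIM('a))"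
      using sum_strict_mono[of Basis "\<lambda>b. \<bar>u \<bullet> b\<bar>" "\<lambda>_. \<delta> / DIM('a)"] by simp
    then show False using norm_le_l1[of u] assms by simp
  qed
  show thesis
  proof (cases "0 \<le> u \<bullet> b")
    case True
    then show ?thesis using b by (intro that[of b]) auto
  next
    case False
    then show ?thesis using b by (intro that[of "- b"]) (auto simp: inner_minus_right)
  qed
qed

lemma measure_tendsto_zero_of_AE_eventually_notin:
  assumes M: "finite_measure M" and B: "\<And>k. B k \<in> sets M"
    and ev: "AE x in M. eventually (\<lambda>k. x \<notin> B k) sequentially"
  shows "(\<lambda>k. measure M (B k)) \<longlonglongrightarrow> 0"
proof -
  have "(\<lambda>k. \<integral>x. indicator (B k) x \<partial>M) \<longlonglongrightarrow> (\<integral>x. (0::real) \<partial>M)"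
  proof (rule integral_dominated_convergence[where w="\<lambda>_. 1"])
    show "AE x in M. (\<lambda>k. indicator (B k) x :: real) \<longlonglongrightarrow> 0"
      using ev
    proof eventually_elim
      case (elim x)
      show ?case by (rule tendsto_eventually) (use elim in \<open>simp add: eventually_mono\<close>)
    qed
    show "\<And>k. AE x in M. norm (indicator (B k) x :: real) \<le> 1"
      by (simp split: split_indicator)
  qed (use B finite_measure.integrable_const[OF M] in simp_all)
  then show ?thesis using B by simp
qed

section \<open>The push-forward of \<open>q\<close> under \<open>\<nabla>\<psi>\<^sup>*(yhat + \<cdot>)\<close>\<close>

locale conj_gradient_push =
  fixes q :: "'a::euclidean_space measure" and \<psi> :: "'a \<Rightarrow> ereal"
    and x yhat :: 'a and G :: "'a \<Rightarrow> 'a"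
  assumes q_P2: "q \<in> P2"
    and psi_ninf: "\<forall>y. \<psi> y \<noteq> -\<infinity>" and psi_lsc: "elsc \<psi>"
    and G_borel [measurable]: "G \<in> borel_measurable borel"
    and G_grad: "AE z in q. has_egradient (conj \<psi>) (yhat + z) (G z)"
    and G_push: "distr q borel G \<in> P2x x"
begin

abbreviation "phat \<equiv> distr q borel G"

text \<open>Real parts, meaningful only where \<open>\<psi>\<close>, resp. \<open>\<psi>\<^sup>*(yhat + \<cdot>)\<close>, is finite
  (\<open>real_of_ereal\<close> sends \<open>\<plusminus>\<infinity>\<close> to \<open>0\<close>); they are only used at such points.\<close>
definition psi_real :: "'a \<Rightarrow> real" where "psi_real y = real_of_ereal (\<psi> y)"

definition conj_real :: "'a \<Rightarrow> real" where "conj_real z = real_of_ereal (conj \<psi> (yhat + z))"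

definition opt_value :: real where "opt_value = x \<bullet> yhat - (\<integral>z. conj_real z \<partial>q)"

definition fy_gap :: "'a \<times> 'a \<Rightarrow> real" where
  "fy_gap w = psi_real (fst w) + conj_real (snd w) - (yhat + snd w) \<bullet> fst w"

lemma qD: "prob_space q" "sets q = sets borel" "space q = UNIV"
  using P2D[OF q_P2] by auto

declare qD(2) [measurable_cong]

lemma psi_borel [measurable]: "\<psi> \<in> borel_measurable borel"
  by (rule borel_measurable_elsc[OF psi_lsc])

lemma psi_real_borel [measurable]: "psi_real \<in> borel_measurable borel"
  unfolding psi_real_def by measurable

lemma conj_real_borel [measurable]: "conj_real \<in> borel_measurable borel"
  unfolding conj_real_def by measurable

lemma fy_gap_borel [measurable]: "fy_gap \<in> borel_measurable borel"
  unfolding fy_gap_def by measurable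

lemma AE_fenchel_eq:
  "AE z in q. conj \<psi> (yhat + z) = ereal (conj_real z)
      \<and> \<psi> (G z) = ereal ((yhat + z) \<bullet> G z - conj_real z)"
  using G_grad
proof eventually_elim
  case (elim z)
  show ?case
    using has_egradient_finite[OF elim] conj_gradient_fenchel_eq[OF psi_lsc psi_ninf elim]
    by (simp add: conj_real_def)
qed

lemma exists_fenchel_eq_point:
  obtains z0 where "conj \<psi> (yhat + z0) = ereal (conj_real z0)"
    "\<psi> (G z0) = ereal ((yhat + z0) \<bullet> G z0 - conj_real z0)"
proof (rule ccontr)
  assume "\<not> thesis"
  from AE_fenchel_eq have "AE z in q. False"
    by eventually_elim (use that \<open>\<not> thesis\<close> in blast)
  then show False using prob_space.AE_False[OF qD(1)] by simp
qed

lemma psi_ge_affine: obtains w0 c0 where "\<And>y. ereal (y \<bullet> w0 + c0) \<le> \<psi> y"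
proof -
  obtain z0 where z0: "conj \<psi> (yhat + z0) = ereal (conj_real z0)"
    using exists_fenchel_eq_point by blast
  have "ereal (y \<bullet> (yhat + z0) + - conj_real z0) \<le> \<psi> y" for y
    using fenchel_young_real[OF _ z0, of y] psi_ninf by (cases "\<psi> y") (auto simp: inner_commute)
  then show thesis by (rule that)
qed

lemma psi_finite_somewhere: obtains y0 b0 where "\<psi> y0 = ereal b0"
proof -
  obtain z0 where "\<psi> (G z0) = ereal ((yhat + z0) \<bullet> G z0 - conj_real z0)"
    using exists_fenchel_eq_point by blast
  then show thesis by (rule that)
qed

lemma G_square_integrable: "integrable q (\<lambda>z. (norm (G z))\<^sup>2)"
  and G_integrable: "integrable q G" and integral_G: "(\<integral>z. G z \<partial>q) = x"
proof -
  have P: "phat \<in> P2" "(\<integral>y. y \<partial>phat) = x" using G_push by (auto simp: P2x_def)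
  have G: "G \<in> borel_measurable q" by measurable
  show "integrable q (\<lambda>z. (norm (G z))\<^sup>2)"
    using P2D(4)[OF P(1)] integrable_distr_eq[OF G, of "\<lambda>y. (norm y)\<^sup>2"] by simp
  show "integrable q G"
    using P2D(5)[OF P(1)] integrable_distr_eq[OF G, of "\<lambda>y. y"] by simp
  show "(\<integral>z. G z \<partial>q) = x"
    using P(2) integral_distr[OF G, of "\<lambda>y. y"] by simp
qed

lemma integrable_inner_G: "integrable q (\<lambda>z. z \<bullet> G z)"
  using P2D(4)[OF q_P2] G_square_integrable by (intro integrable_inner_square_integrable) simp_all

lemma integrable_conj_real: "integrable q conj_real"
proof -
  obtain z0 where z0: "conj \<psi> (yhat + z0) = ereal (conj_real z0)"
    and psi_z0: "\<psi> (G z0) = ereal ((yhat + z0) \<bullet> G z0 - conj_real z0)"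
    using exists_fenchel_eq_point by blast
  define y0 b0 where "y0 = G z0" and "b0 = (yhat + z0) \<bullet> G z0 - conj_real z0"
  have fin: "finite_measure q" using qD(1) by (rule prob_space.finite_measure)
  show ?thesis
  proof (rule integrable_bounded_between)
    show "integrable q (\<lambda>z. z \<bullet> y0 + (yhat \<bullet> y0 - b0))"
      using q_P2 by (rule P2_integrable_affine)
    show "integrable q (\<lambda>z. z \<bullet> G z - z0 \<bullet> G z + conj_real z0)"
      by (intro Bochner_Integration.integrable_add Bochner_Integration.integrable_diff
          integrable_inner_right integrable_inner_G G_integrable finite_measure.integrable_const[OF fin])
    show "AE z in q. z \<bullet> y0 + (yhat \<bullet> y0 - b0) \<le> conj_real z
        \<and> conj_real z \<le> z \<bullet> G z - z0 \<bullet> G z + conj_real z0"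
      using AE_fenchel_eq
    proof eventually_elim
      case (elim z)
      have "(yhat + z) \<bullet> y0 \<le> b0 + conj_real z"
        using fenchel_young_real psi_z0 elim unfolding y0_def b0_def by blast
      then have "z \<bullet> y0 + (yhat \<bullet> y0 - b0) \<le> conj_real z" by (simp add: inner_add_left)
      moreover have "(yhat + z0) \<bullet> G z \<le> ((yhat + z) \<bullet> G z - conj_real z) + conj_real z0"
        using fenchel_young_real elim z0 by blast
      then have "conj_real z \<le> z \<bullet> G z - z0 \<bullet> G z + conj_real z0" by (simp add: inner_add_left)
      ultimately show ?case ..
    qed
  qed measurable
qed

lemma eint_phat: "eint phat \<psi> = ereal (yhat \<bullet> x + (\<integral>z. z \<bullet> G z \<partial>q) - (\<integral>z. conj_real z \<partial>q))"
proof -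
  have "eint phat \<psi> = eint q (\<lambda>z. \<psi> (G z))" by (rule eint_distr) measurable
  also have "\<dots> = ereal (\<integral>z. yhat \<bullet> G z + z \<bullet> G z - conj_real z \<partial>q)"
  proof (rule eint_eq_integral)
    show "AE z in q. \<psi> (G z) = ereal (yhat \<bullet> G z + z \<bullet> G z - conj_real z)"
      using AE_fenchel_eq by eventually_elim (simp add: inner_add_left)
    show "integrable q (\<lambda>z. yhat \<bullet> G z + z \<bullet> G z - conj_real z)"
      using G_integrable integrable_inner_G integrable_conj_real by simp
  qed
  also have "(\<integral>z. yhat \<bullet> G z + z \<bullet> G z - conj_real z \<partial>q)
      = yhat \<bullet> x + (\<integral>z. z \<bullet> G z \<partial>q) - (\<integral>z. conj_real z \<partial>q)"
    using G_integrable integrable_inner_G integrable_conj_real integral_G by simp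
  finally show ?thesis .
qed

lemma graph_coupling:
  "distr q borel (\<lambda>z. (G z, z)) \<in> couplings phat q"
  "(\<integral>w. fst w \<bullet> snd w \<partial>distr q borel (\<lambda>z. (G z, z))) = (\<integral>z. z \<bullet> G z \<partial>q)"
proof -
  have "(\<lambda>z. (G z, z)) \<in> q \<rightarrow>\<^sub>M borel \<Otimes>\<^sub>M borel"
    by (rule measurable_Pair) (simp_all add: measurable_borel_sets_eq[OF qD(2)])
  then have GI: "(\<lambda>z. (G z, z)) \<in> q \<rightarrow>\<^sub>M borel" by (simp add: borel_prod)
  have "distr (distr q borel (\<lambda>z. (G z, z))) borel snd = q"
    using distr_distr[OF borel_measurable_snd GI] distr_id2[OF qD(2)[symmetric]] by (simp add: comp_def)
  moreover have "distr (distr q borel (\<lambda>z. (G z, z))) borel fst = phat"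
    using distr_distr[OF borel_measurable_fst GI] by (simp add: comp_def)
  ultimately show "distr q borel (\<lambda>z. (G z, z)) \<in> couplings phat q"
    unfolding couplings_def using prob_space.prob_space_distr[OF qD(1) GI] by simp
  show "(\<integral>w. fst w \<bullet> snd w \<partial>distr q borel (\<lambda>z. (G z, z))) = (\<integral>z. z \<bullet> G z \<partial>q)"
    by (subst integral_distr[OF GI]) (simp_all add: inner_commute)
qed

lemma phat_value_le: "eint phat \<psi> - MCov phat q \<le> ereal opt_value"
proof -
  have "ereal (\<integral>z. z \<bullet> G z \<partial>q) \<le> MCov phat q"
    unfolding MCov_def by (rule SUP_upper2[OF graph_coupling(1)]) (simp add: graph_coupling(2))
  then have "eint phat \<psi> - MCov phat q \<le> eint phat \<psi> - ereal (\<integral>z. z \<bullet> G z \<partial>q)"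
    by (rule ereal_minus_mono[OF order_refl])
  also have "\<dots> = ereal opt_value"
    unfolding eint_phat opt_value_def by (simp add: inner_commute[of x yhat])
  finally show ?thesis .
qed

lemma eint_psi_finiteD:
  assumes "p \<in> P2" and "eint p \<psi> \<noteq> \<infinity>"
  shows "integrable p psi_real" "AE y in p. \<psi> y = ereal (psi_real y)"
    "eint p \<psi> = ereal (\<integral>y. psi_real y \<partial>p)"
proof -
  obtain w0 c0 where aff: "\<And>y. ereal (y \<bullet> w0 + c0) \<le> \<psi> y" using psi_ge_affine by blast
  have [measurable_cong]: "sets p = sets borel" using P2D(2)[OF assms(1)] .
  have "\<psi> \<in> borel_measurable p" by measurable
  note bounded = eint_finite_bounded_below[OF this aff P2_integrable_affine[OF assms(1)] assms(2)]
  show "integrable p psi_real" "AE y in p. \<psi> y = ereal (psi_real y)"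
    "eint p \<psi> = ereal (\<integral>y. psi_real y \<partial>p)"
    using bounded unfolding psi_real_def[abs_def] by simp_all
qed

lemma fy_gap_coupling:
  assumes p: "p \<in> P2x x" and pint: "integrable p psi_real"
    and pae: "AE y in p. \<psi> y = ereal (psi_real y)" and \<pi>: "\<pi> \<in> couplings p q"
  shows "integrable \<pi> fy_gap"
    and "(\<integral>w. fy_gap w \<partial>\<pi>) = (\<integral>y. psi_real y \<partial>p) - opt_value - (\<integral>w. fst w \<bullet> snd w \<partial>\<pi>)"
    and "AE w in \<pi>. \<psi> (fst w) = ereal (psi_real (fst w)) \<and> 0 \<le> fy_gap w"
proof -
  have pP: "p \<in> P2" and bary: "(\<integral>y. y \<partial>p) = x" using p by (auto simp: P2x_def)
  have yhat_borel [measurable]: "(\<lambda>y::'a. yhat \<bullet> y) \<in> borel_measurable borel" by measurable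
  have i1: "integrable \<pi> (\<lambda>w. psi_real (fst w))"
    using coupling_fst_marginal(1)[OF \<pi> psi_real_borel] pint by simp
  have i2: "integrable \<pi> (\<lambda>w. conj_real (snd w))"
    using coupling_snd_marginal(1)[OF \<pi> conj_real_borel] integrable_conj_real by simp
  have i3: "integrable \<pi> (\<lambda>w. yhat \<bullet> fst w)"
    using coupling_fst_marginal(1)[OF \<pi> yhat_borel] P2D(5)[OF pP] by simp
  have i4: "integrable \<pi> (\<lambda>w. fst w \<bullet> snd w)"
    by (rule integrable_coupling_inner[OF \<pi> pP q_P2])
  have eq: "fy_gap = (\<lambda>w. psi_real (fst w) + conj_real (snd w) - yhat \<bullet> fst w - fst w \<bullet> snd w)"
    by (simp add: fun_eq_iff fy_gap_def inner_add_left inner_add_right inner_commute)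
  show "integrable \<pi> fy_gap" unfolding eq using i1 i2 i3 i4 by simp
  have "(\<integral>w. fy_gap w \<partial>\<pi>) = (\<integral>w. psi_real (fst w) \<partial>\<pi>) + (\<integral>w. conj_real (snd w) \<partial>\<pi>)
      - (\<integral>w. yhat \<bullet> fst w \<partial>\<pi>) - (\<integral>w. fst w \<bullet> snd w \<partial>\<pi>)"
    unfolding eq using i1 i2 i3 i4 by simp
  also have "\<dots> = (\<integral>y. psi_real y \<partial>p) - opt_value - (\<integral>w. fst w \<bullet> snd w \<partial>\<pi>)"
    using coupling_fst_marginal(2)[OF \<pi> psi_real_borel] coupling_snd_marginal(2)[OF \<pi> conj_real_borel]
      coupling_fst_marginal(2)[OF \<pi> yhat_borel] P2D(5)[OF pP] bary
    by (simp add: opt_value_def inner_commute)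
  finally show "(\<integral>w. fy_gap w \<partial>\<pi>) = (\<integral>y. psi_real y \<partial>p) - opt_value - (\<integral>w. fst w \<bullet> snd w \<partial>\<pi>)" .
  show "AE w in \<pi>. \<psi> (fst w) = ereal (psi_real (fst w)) \<and> 0 \<le> fy_gap w"
    using AE_coupling_fst[OF \<pi> pae] AE_coupling_snd[OF \<pi> AE_fenchel_eq]
  proof eventually_elim
    case (elim w)
    then show ?case
      using fenchel_young_real[of \<psi> "fst w" _ "yhat + snd w"] by (auto simp: fy_gap_def)
  qed
qed

lemma opt_value_le:
  assumes p: "p \<in> P2x x"
  shows "ereal opt_value \<le> eint p \<psi> - MCov p q"
proof (cases "eint p \<psi> = \<infinity>")
  case True
  then show ?thesis by (cases "MCov p q") auto
next
  case False
  have pP: "p \<in> P2" using p by (simp add: P2x_def)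
  note fin = eint_psi_finiteD[OF pP False]
  have "(\<integral>w. fst w \<bullet> snd w \<partial>\<pi>) \<le> (\<integral>y. psi_real y \<partial>p) - opt_value" if \<pi>: "\<pi> \<in> couplings p q" for \<pi>
  proof -
    note gap = fy_gap_coupling[OF p fin(1,2) \<pi>]
    have "0 \<le> (\<integral>w. fy_gap w \<partial>\<pi>)" using gap(3) by (intro integral_nonneg_AE) auto
    then show ?thesis using gap(2) by simp
  qed
  then have "MCov p q \<le> ereal ((\<integral>y. psi_real y \<partial>p) - opt_value)"
    unfolding MCov_def by (intro SUP_least) simp
  then show ?thesis unfolding fin(3) by (cases "MCov p q") auto
qed

lemma phi_eq_opt_value: "phi \<psi> q x = ereal opt_value"
  and phat_optimal: "eint phat \<psi> - MCov phat q = ereal opt_value"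
proof -
  have "phi \<psi> q x \<le> eint phat \<psi> - MCov phat q" unfolding phi_def by (rule INF_lower[OF G_push])
  moreover have "ereal opt_value \<le> phi \<psi> q x" unfolding phi_def by (rule INF_greatest) (rule opt_value_le)
  ultimately show "phi \<psi> q x = ereal opt_value" "eint phat \<psi> - MCov phat q = ereal opt_value"
    using phat_value_le opt_value_le[OF G_push] by (auto intro: antisym)
qed

lemma optimal_coupling_small_gap:
  assumes p: "p \<in> P2x x" and opt: "eint p \<psi> - MCov p q = ereal opt_value" and "0 < e"
  obtains \<pi> where "\<pi> \<in> couplings p q" "integrable \<pi> fy_gap"
    "AE w in \<pi>. \<psi> (fst w) = ereal (psi_real (fst w)) \<and> 0 \<le> fy_gap w" "(\<integral>w. fy_gap w \<partial>\<pi>) < e"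
proof -
  have pP: "p \<in> P2" using p by (simp add: P2x_def)
  have "eint p \<psi> \<noteq> \<infinity>" using opt by (cases "MCov p q") auto
  note fin = eint_psi_finiteD[OF pP this]
  have "MCov p q = ereal ((\<integral>y. psi_real y \<partial>p) - opt_value)"
    using opt unfolding fin(3) by (cases "MCov p q") auto
  then have "ereal ((\<integral>y. psi_real y \<partial>p) - opt_value - e) < MCov p q" using \<open>0 < e\<close> by simp
  then obtain \<pi> where \<pi>: "\<pi> \<in> couplings p q"
    and "(\<integral>y. psi_real y \<partial>p) - opt_value - e < (\<integral>w. fst w \<bullet> snd w \<partial>\<pi>)"
    unfolding MCov_def by (auto simp: less_SUP_iff)
  then show thesis using fy_gap_coupling[OF p fin(1,2) \<pi>] by (intro that[OF \<pi>]) simp_all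
qed

text \<open>Away from steep points, distance from the graph of \<open>G\<close> forces Fenchel--Young slack
  (\<open>fenchel_young_gap_lower_bound\<close>); differentiability of \<open>\<psi>\<^sup>*\<close> makes steep points rare as
  \<open>t \<rightarrow> 0\<close>.\<close>
definition steep :: "real \<Rightarrow> real \<Rightarrow> 'a set" where
  "steep t d = {z. \<exists>v\<in>Basis \<union> uminus ` Basis.
      ereal (conj_real z + t * (G z \<bullet> v) + t * d / 2) \<le> conj \<psi> (yhat + z + t *\<^sub>R v)}"

lemma steep_borel [measurable]: "steep t d \<in> sets borel"
proof -
  have "steep t d = {z \<in> space borel. \<exists>v\<in>Basis \<union> uminus ` Basis.
      ereal (conj_real z + t * (G z \<bullet> v) + t * d / 2) \<le> conj \<psi> (yhat + z + t *\<^sub>R v)}"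
    by (simp add: steep_def)
  also have "\<dots> \<in> sets borel" by measurable
  finally show ?thesis .
qed

lemma measure_steep_tendsto_zero:
  assumes "0 < d"
  shows "(\<lambda>k. measure q (steep (inverse (Suc k)) d)) \<longlonglongrightarrow> 0"
proof (rule measure_tendsto_zero_of_AE_eventually_notin)
  show "finite_measure q" using qD(1) by (rule prob_space.finite_measure)
  show "steep (inverse (Suc k)) d \<in> sets q" for k using qD(2) by simp
  show "AE z in q. \<forall>\<^sub>F k in sequentially. z \<notin> steep (inverse (Suc k)) d"
    using G_grad
  proof eventually_elim
    case (elim z)
    obtain r where "0 < r" and up: "\<And>h. norm h < r \<Longrightarrow>
        conj \<psi> (yhat + z + h) \<le> ereal (conj_real z + G z \<bullet> h + d / 4 * norm h)"
      by (rule has_egradient_upper_bound[OF elim, of "d / 4"])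
        (use \<open>0 < d\<close> in \<open>simp_all add: conj_real_def\<close>)
    have "eventually (\<lambda>k. inverse (Suc k) < r) sequentially"
      using \<open>0 < r\<close> by (rule Archimedean_eventually_inverse[THEN iffD2])
    then show ?case
    proof (rule eventually_mono)
      fix k assume small: "inverse (Suc k) < r"
      show "z \<notin> steep (inverse (Suc k)) d"
      proof
        assume "z \<in> steep (inverse (Suc k)) d"
        then obtain v where v: "v \<in> Basis \<union> uminus ` Basis" and
          ge: "ereal (conj_real z + inverse (Suc k) * (G z \<bullet> v) + inverse (Suc k) * d / 2)
                \<le> conj \<psi> (yhat + z + inverse (Suc k) *\<^sub>R v)"
          unfolding steep_def by blast
        have "norm v = 1" using v by auto
        then have "conj \<psi> (yhat + z + inverse (Suc k) *\<^sub>R v)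
            \<le> ereal (conj_real z + inverse (Suc k) * (G z \<bullet> v) + d / 4 * inverse (Suc k))"
          using up[of "inverse (Suc k) *\<^sub>R v"] small by simp
        with ge have "ereal (conj_real z + inverse (Suc k) * (G z \<bullet> v) + inverse (Suc k) * d / 2)
            \<le> ereal (conj_real z + inverse (Suc k) * (G z \<bullet> v) + d / 4 * inverse (Suc k))"
          by (rule order_trans)
        then have "inverse (Suc k) * d / 2 \<le> inverse (Suc k) * d / 4" by (simp add: mult.commute)
        moreover have "0 < inverse (real (Suc k)) * d" using \<open>0 < d\<close> by simp
        ultimately show False by linarith
      qed
    qed
  qed
qed

lemma far_from_graph_gap_or_steep:
  assumes "\<psi> y = ereal (psi_real y)" and "\<delta> \<le> dist y (G z)" and "0 < t"
  shows "t * (\<delta> / DIM('a)) / 2 < fy_gap (y, z) \<or> z \<in> steep t (\<delta> / DIM('a))"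
proof (cases "z \<in> steep t (\<delta> / DIM('a))")
  case False
  obtain v where v: "v \<in> Basis \<union> uminus ` Basis" "\<delta> / DIM('a) \<le> (y - G z) \<bullet> v"
    using assms(2) exists_signed_Basis_inner_ge[of \<delta> "y - G z"] by (auto simp: dist_norm)
  then have "conj \<psi> (yhat + z + t *\<^sub>R v)
      < ereal (conj_real z + t * (G z \<bullet> v) + t * (\<delta> / DIM('a)) / 2)"
    using False unfolding steep_def by (auto simp: not_le)
  from fenchel_young_gap_lower_bound[OF assms(1) this v(2)] \<open>0 < t\<close> show ?thesis
    by (simp add: fy_gap_def)
qed simp

lemma measure_far_from_graph_le:
  assumes \<pi>: "\<pi> \<in> couplings p q" and int: "integrable \<pi> fy_gap"
    and ae: "AE w in \<pi>. \<psi> (fst w) = ereal (psi_real (fst w)) \<and> 0 \<le> fy_gap w"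
    and "0 < \<delta>" "0 < t"
  defines "c \<equiv> t * (\<delta> / DIM('a)) / 2"
  shows "measure \<pi> {w. \<delta> \<le> dist (fst w) (G (snd w))}
    \<le> (\<integral>w. fy_gap w \<partial>\<pi>) / c + measure q (steep t (\<delta> / DIM('a)))"
proof -
  note cpl = couplingsD[OF \<pi>]
  have "0 < c" using \<open>0 < \<delta>\<close> \<open>0 < t\<close> by (simp add: c_def)
  have [measurable_cong]: "sets \<pi> = sets borel" by (rule cpl(2))
  define S1 where "S1 = {w\<in>space \<pi>. c \<le> fy_gap w}"
  define S2 where "S2 = snd -` steep t (\<delta> / DIM('a)) \<inter> space \<pi>"
  have S1: "S1 \<in> sets \<pi>" unfolding S1_def by measurable
  have S2: "S2 \<in> sets \<pi>" unfolding S2_def by (rule measurable_sets[OF cpl(7) steep_borel])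
  have "AE w in \<pi>. w \<in> {w. \<delta> \<le> dist (fst w) (G (snd w))} \<longrightarrow> w \<in> S1 \<union> S2"
    using ae
  proof eventually_elim
    case (elim w)
    then show ?case
      using far_from_graph_gap_or_steep[of "fst w" \<delta> "snd w" t] \<open>0 < t\<close>
      by (auto simp: S1_def S2_def c_def cpl(3))
  qed
  then have "measure \<pi> {w. \<delta> \<le> dist (fst w) (G (snd w))} \<le> measure \<pi> (S1 \<union> S2)"
    using S1 S2 prob_space.finite_measure[OF cpl(1)] by (intro finite_measure.finite_measure_mono_AE) auto
  also have "\<dots> \<le> measure \<pi> S1 + measure \<pi> S2" using S1 S2 by (rule measure_Un_le)
  also have "measure \<pi> S1 \<le> (\<integral>w. fy_gap w \<partial>\<pi>) / c"
    unfolding S1_def using int ae \<open>0 < c\<close>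
    by (intro integral_Markov_inequality_measure[where A="space \<pi>"]) auto
  also have "measure \<pi> S2 = measure q (steep t (\<delta> / DIM('a)))"
    unfolding S2_def using measure_distr[OF cpl(7) steep_borel] cpl(5) by simp
  finally show ?thesis by simp
qed

lemma optimal_coupling_concentrates:
  assumes p: "p \<in> P2x x" and opt: "eint p \<psi> - MCov p q = ereal opt_value" and "0 < \<delta>" "0 < \<eta>"
  shows "\<exists>\<pi>\<in>couplings p q. measure \<pi> {w. \<delta> \<le> dist (fst w) (G (snd w))} \<le> \<eta>"
proof -
  define d where "d = \<delta> / DIM('a)"
  have "0 < d" using \<open>0 < \<delta>\<close> by (simp add: d_def)
  have "eventually (\<lambda>k. measure q (steep (inverse (Suc k)) d) < \<eta> / 2) sequentially"
    using order_tendstoD(2)[OF measure_steep_tendsto_zero[OF \<open>0 < d\<close>], of "\<eta> / 2"] \<open>0 < \<eta>\<close> by simp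
  then obtain k where k: "measure q (steep (inverse (Suc k)) d) < \<eta> / 2"
    by (meson eventually_sequentially order_refl)
  define t where "t = inverse (real (Suc k))"
  have "0 < t * d / 2" using \<open>0 < d\<close> by (simp add: t_def)
  then obtain \<pi> where \<pi>: "\<pi> \<in> couplings p q" "integrable \<pi> fy_gap"
      "AE w in \<pi>. \<psi> (fst w) = ereal (psi_real (fst w)) \<and> 0 \<le> fy_gap w"
    and small: "(\<integral>w. fy_gap w \<partial>\<pi>) < t * d / 2 * (\<eta> / 2)"
    using optimal_coupling_small_gap[OF p opt, of "t * d / 2 * (\<eta> / 2)"] \<open>0 < \<eta>\<close> by auto
  have "(\<integral>w. fy_gap w \<partial>\<pi>) / (t * d / 2) < \<eta> / 2"
    using small \<open>0 < t * d / 2\<close> by (simp add: divide_less_eq mult.commute)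
  with measure_far_from_graph_le[OF \<pi> \<open>0 < \<delta>\<close>, of t] k
  have "measure \<pi> {w. \<delta> \<le> dist (fst w) (G (snd w))} \<le> \<eta>"
    by (simp add: d_def t_def)
  then show ?thesis using \<pi>(1) by blast
qed

lemma optimal_unique:
  assumes "p \<in> P2x x" and "eint p \<psi> - MCov p q = phi \<psi> q x"
  shows "p = phat"
proof (rule eq_distr_of_couplings_concentrating)
  show "prob_space p" "sets p = sets borel" using assms(1) by (auto simp: P2x_def P2_def)
  show "\<exists>\<pi>\<in>couplings p q. measure \<pi> {w. \<delta> \<le> dist (fst w) (G (snd w))} \<le> \<eta>"
    if "0 < \<delta>" "0 < \<eta>" for \<delta> \<eta>
    using optimal_coupling_concentrates[OF assms(1) _ that] assms(2) phi_eq_opt_value by simp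
qed (use qD in auto)

lemma dual_value_le: "ereal (x \<bullet> y) - eint q (\<lambda>z. conj \<psi> (y + z)) \<le> ereal opt_value"
proof (cases "eint q (\<lambda>z. conj \<psi> (y + z)) = \<infinity>")
  case False
  obtain y0 b0 where y0: "\<psi> y0 = ereal b0" by (rule psi_finite_somewhere)
  have aff: "ereal (z \<bullet> y0 + (y \<bullet> y0 - b0)) \<le> conj \<psi> (y + z)" for z
  proof -
    have "(y + z) \<bullet> y0 - b0 = z \<bullet> y0 + (y \<bullet> y0 - b0)" by (simp add: inner_add_left)
    then show ?thesis using conj_ge_affine[of \<psi> y0 b0 "y + z", OF y0] by (simp add: add_diff_eq)
  qed
  have "(\<lambda>z. conj \<psi> (y + z)) \<in> borel_measurable q" by measurable
  note dual = eint_finite_bounded_below[OF this aff P2_integrable_affine[OF q_P2] False]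
  define Sy where "Sy z = real_of_ereal (conj \<psi> (y + z))" for z
  have "AE z in q. (y - yhat) \<bullet> G z + conj_real z \<le> Sy z"
    using AE_fenchel_eq dual(2)
  proof eventually_elim
    case (elim z)
    then show ?case
      using fenchel_young_real[of \<psi> "G z" _ "y + z" "Sy z"]
      by (simp add: Sy_def inner_diff_left inner_add_left)
  qed
  then have "(\<integral>z. (y - yhat) \<bullet> G z + conj_real z \<partial>q) \<le> (\<integral>z. Sy z \<partial>q)"
    using G_integrable integrable_conj_real dual(1)
    by (intro integral_mono_AE) (simp_all add: Sy_def)
  then have "(y - yhat) \<bullet> x + (\<integral>z. conj_real z \<partial>q) \<le> (\<integral>z. Sy z \<partial>q)"
    using G_integrable integrable_conj_real integral_G by simp
  then show ?thesis
    unfolding dual(3) by (simp add: Sy_def opt_value_def inner_diff_left inner_diff_right inner_commute)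
qed simp

lemma dual_value_yhat: "ereal (x \<bullet> yhat) - eint q (\<lambda>z. conj \<psi> (yhat + z)) = ereal opt_value"
proof -
  have "eint q (\<lambda>z. conj \<psi> (yhat + z)) = ereal (\<integral>z. conj_real z \<partial>q)"
    using AE_fenchel_eq integrable_conj_real by (intro eint_eq_integral) auto
  then show ?thesis by (simp add: opt_value_def)
qed

lemma dual_attained:
  "ereal (x \<bullet> yhat) - eint q (\<lambda>z. conj \<psi> (yhat + z))
     = (SUP y. ereal (x \<bullet> y) - eint q (\<lambda>z. conj \<psi> (y + z)))"
proof (rule antisym)
  show "(SUP y. ereal (x \<bullet> y) - eint q (\<lambda>z. conj \<psi> (y + z)))
      \<le> ereal (x \<bullet> yhat) - eint q (\<lambda>z. conj \<psi> (yhat + z))"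
    unfolding dual_value_yhat by (rule SUP_least) (rule dual_value_le)
qed (rule SUP_upper, simp)

end

theorem lemma3p3:
  fixes q :: "'a::euclidean_space measure" and \<psi> :: "'a \<Rightarrow> ereal"
    and x yhat :: 'a and G :: "'a \<Rightarrow> 'a"
  assumes q: "q \<in> P2" and small: "no_mass_small_sets q"
    and psi_ninf: "\<forall>y. \<psi> y \<noteq> -\<infinity>" and psi_lsc: "elsc \<psi>" and psi_cvx: "econvex \<psi>"
    and G_meas: "G \<in> borel_measurable borel"
    and G_grad: "AE z in q. has_egradient (conj \<psi>) (yhat + z) (G z)"
    and phat: "distr q borel G \<in> P2x x"
  shows "(eint (distr q borel G) \<psi> - MCov (distr q borel G) q = phi \<psi> q x \<and>
          (\<forall>p\<in>P2x x. eint p \<psi> - MCov p q = phi \<psi> q x \<longrightarrow> p = distr q borel G))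
     \<and> (phi \<psi> q x \<noteq> -\<infinity> \<and> x \<in> interior (edom \<psi>) \<longrightarrow>
          ereal (x \<bullet> yhat) - eint q (\<lambda>z. conj \<psi> (yhat + z))
            = (SUP y. ereal (x \<bullet> y) - eint q (\<lambda>z. conj \<psi> (y + z))))"
proof -
  txt \<open>Convexity of \<open>\<psi>\<close> and the small-sets condition only serve, in the paper, to make
    \<open>\<psi>\<^sup>*\<close> differentiable \<open>q\<close>-a.e.; here the gradient map \<open>G\<close> is given.\<close>
  interpret conj_gradient_push q \<psi> x yhat G
    using q psi_ninf psi_lsc G_meas G_grad phat by unfold_locales
  show ?thesis
    using phat_optimal phi_eq_opt_value optimal_unique dual_attained by (intro conjI ballI impI) simp_all
qed

end
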